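(* Let $\mathfrak a=\mathbb H^p$ and $V=\mathrm{Span}(J_1,J_2,J_3)$ with $J_1=\mathrm{diag}(\lambda_1L_{\mathrm i},\dots,\lambda_pL_{\mathrm i})$, $J_2=\mathrm{diag}(\mu_1L_{\mathrm j},\dots,\mu_pL_{\mathrm j})$, $J_3=\mathrm{diag}(\mu_1L_{\mathrm k},\dots,\mu_pL_{\mathrm k})$, where all $\lambda_s,\mu_s\in\mathbb R$ are nonzero. Let $\langle\cdot,\cdot\rangle$ be an inner product on $V$ for which $J_1,J_2,J_3$ are mutually orthogonal and $\|J_2\|=\|J_3\|$. Then $(V,\langle\cdot,\cdot\rangle)$ is a WS-pair.
   Context: $\mathbb H$ denotes the quaternions, $\mathrm i,\mathrm j,\mathrm k$ the standard basis of $\mathrm{Im}\,\mathbb H$, $L_q$ left multiplication by $q$, and $\mathrm{diag}$ block-diagonal operators on $\mathbb H^p$. For a Euclidean space $\mathfrak a$, a subspace $V\subset\mathfrak{so}(\mathfrak a)$ with inner product $\langle\cdot,\cdot\rangle$ defines the metric 2-step nilpotent Lie algebra $\mathfrak n=V\oplus\mathfrak a$ (orthogonal sum, $V$ central, $\langle J,[X,Y]\rangle=\langle JX,Y\rangle$). It is a WS-pair if the corresponding simply connected nilpotent Lie group with left-invariant metric is weakly symmetric. Standing fact: this holds iff for every $J\in V$, $X\in\mathfrak a$ there is $N\in\mathcal N(V)=\{N\in O(\mathfrak a): NVN^{-1}\subset V$, $K\mapsto NKN^{-1}$ orthogonal on $(V,\langle\cdot,\cdot\rangle)\}$ with $NX=-X$,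 $NJ=-JN$. *)

theory Defs
  imports "HOL-Analysis.Analysis"
begin

text \<open>Quaternions modelled as real^4 with coordinates (1, i, j, k) at indices 1,2,3,4.\<close>

definition qmult :: "real^4 \<Rightarrow> real^4 \<Rightarrow> real^4" where
  "qmult q r = vector
     [ q$1 * r$1 - q$2 * r$2 - q$3 * r$3 - q$4 * r$4,
       q$1 * r$2 + q$2 * r$1 + q$3 * r$4 - q$4 * r$3,
       q$1 * r$3 - q$2 * r$4 + q$3 * r$1 + q$4 * r$2,
       q$1 * r$4 + q$2 * r$3 - q$3 * r$2 + q$4 * r$1 ]"

definition qi :: "real^4" where "qi = vector [0, 1, 0, 0]"
definition qj :: "real^4" where "qj = vector [0, 0, 1, 0]"
definition qk :: "real^4" where "qk = vector [0, 0, 0, 1]"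

definition Lmul :: "real^4 \<Rightarrow> real^4 \<Rightarrow> real^4" where
  "Lmul q = (\<lambda>r. qmult q r)"

definition diagop :: "('p::finite \<Rightarrow> real) \<Rightarrow> (real^4 \<Rightarrow> real^4) \<Rightarrow> real^4^'p \<Rightarrow> real^4^'p" where
  "diagop c L = (\<lambda>x. \<chi> s. c s *\<^sub>R L (x$s))"

text \<open>An inner product on a set V of operators (assumed to be a linear subspace).\<close>
definition inner_product_on :: "('a::real_vector \<Rightarrow> 'a) set \<Rightarrow> (('a \<Rightarrow> 'a) \<Rightarrow> ('a \<Rightarrow> 'a) \<Rightarrow> real) \<Rightarrow> bool" where
  "inner_product_on V ip \<longleftrightarrow>
     (\<forall>K\<in>V. \<forall>K'\<in>V. \<forall>K''\<in>V. \<forall>a b.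
        ip (\<lambda>x. a *\<^sub>R K x + b *\<^sub>R K' x) K'' = a * ip K K'' + b * ip K' K'') \<and>
     (\<forall>K\<in>V. \<forall>K'\<in>V. ip K K' = ip K' K) \<and>
     (\<forall>K\<in>V. K \<noteq> (\<lambda>x. 0) \<longrightarrow> ip K K > 0)"

definition normalizer :: "('a::real_inner \<Rightarrow> 'a) set \<Rightarrow> (('a \<Rightarrow> 'a) \<Rightarrow> ('a \<Rightarrow> 'a) \<Rightarrow> real) \<Rightarrow> ('a \<Rightarrow> 'a) set" where
  "normalizer V ip = {N. orthogonal_transformation N \<and>
      (\<forall>K\<in>V. N \<circ> K \<circ> inv N \<in> V) \<and>
      (\<forall>K\<in>V. \<forall>K'\<in>V. ip (N \<circ> K \<circ> inv N) (N \<circ> K' \<circ> inv N) = ip K K')}"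

text \<open>WS-pair, via the standing characterization.\<close>
definition WS_pair :: "('a::real_inner \<Rightarrow> 'a) set \<Rightarrow> (('a \<Rightarrow> 'a) \<Rightarrow> ('a \<Rightarrow> 'a) \<Rightarrow> real) \<Rightarrow> bool" where
  "WS_pair V ip \<longleftrightarrow>
     (\<forall>J\<in>V. \<forall>X. \<exists>N\<in>normalizer V ip. N X = - X \<and> (\<forall>Y. N (J Y) = - J (N Y)))"

end

theory Submission imports Defs begin

text \<open>Write \<open>J = a J\<^sub>1 + b J\<^sub>2 + c J\<^sub>3\<close> and pick a unit quaternion \<open>u \<in> span(j, k)\<close> orthogonal
  to \<open>b j + c k\<close>. Conjugation by \<open>u\<close> is the rotation by \<open>\<pi>\<close> about \<open>u\<close>: it negates \<open>a i + b j + c k\<close>,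
  and on the coordinates of \<open>V\<close> it acts by \<open>a \<mapsto> -a\<close> and a reflection of the \<open>(b, c)\<close>-plane, which
  preserves the inner product because \<open>\<parallel>J\<^sub>2\<parallel> = \<parallel>J\<^sub>3\<parallel>\<close>. The orthogonal map \<open>N(x)\<^sub>s = u x\<^sub>s v\<^sub>s\<close> with unit
  quaternions \<open>v\<^sub>s\<close> conjugates \<open>V\<close> blockwise by \<open>u\<close>, so \<open>N J N\<^sup>-\<^sup>1 = -J\<close>, and the \<open>v\<^sub>s\<close> can be chosen
  with \<open>u X\<^sub>s v\<^sub>s = -X\<^sub>s\<close>, i.e. \<open>N X = -X\<close>.\<close>

lemma vector_4_nth [simp]:
  "(vector [x, y, z, w] :: ('a::zero)^4) $ 1 = x"
  "(vector [x, y, z, w] :: ('a::zero)^4) $ 2 = y"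
  "(vector [x, y, z, w] :: ('a::zero)^4) $ 3 = z"
  "(vector [x, y, z, w] :: ('a::zero)^4) $ 4 = w"
  unfolding vector_def by simp_all

lemma quat_eq_iff: "(q::real^4) = r \<longleftrightarrow> q$1 = r$1 \<and> q$2 = r$2 \<and> q$3 = r$3 \<and> q$4 = r$4"
  by (simp add: vec_eq_iff forall_4)

lemma qmult_nth [simp]:
  "qmult q r $ 1 = q$1 * r$1 - q$2 * r$2 - q$3 * r$3 - q$4 * r$4"
  "qmult q r $ 2 = q$1 * r$2 + q$2 * r$1 + q$3 * r$4 - q$4 * r$3"
  "qmult q r $ 3 = q$1 * r$3 - q$2 * r$4 + q$3 * r$1 + q$4 * r$2"
  "qmult q r $ 4 = q$1 * r$4 + q$2 * r$3 - q$3 * r$2 + q$4 * r$1"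
  by (simp_all add: qmult_def)

definition qconj :: "real^4 \<Rightarrow> real^4" where
  "qconj q = vector [q$1, - q$2, - q$3, - q$4]"

definition qone :: "real^4" where
  "qone = vector [1, 0, 0, 0]"

lemma qconj_nth [simp]:
  "qconj q $ 1 = q$1" "qconj q $ 2 = - q$2" "qconj q $ 3 = - q$3" "qconj q $ 4 = - q$4"
  by (simp_all add: qconj_def)

lemma qone_nth [simp]: "qone $ 1 = 1" "qone $ 2 = 0" "qone $ 3 = 0" "qone $ 4 = 0"
  by (simp_all add: qone_def)

lemma qmult_assoc: "qmult (qmult a b) c = qmult a (qmult b c)"
  by (simp add: quat_eq_iff algebra_simps)

lemma qmult_qone [simp]: "qmult qone q = q" "qmult q qone = q"
  by (simp_all add: quat_eq_iff)

lemma qmult_scaleR [simp]: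
  "qmult (t *\<^sub>R a) b = t *\<^sub>R qmult a b" "qmult a (t *\<^sub>R b) = t *\<^sub>R qmult a b"
  by (simp_all add: quat_eq_iff algebra_simps)

lemma qmult_add: "qmult (a + b) c = qmult a c + qmult b c" "qmult a (b + c) = qmult a b + qmult a c"
  by (simp_all add: quat_eq_iff algebra_simps)

lemma qmult_zero [simp]: "qmult 0 b = 0" "qmult a 0 = 0"
  by (simp_all add: quat_eq_iff)

lemma qmult_uminus [simp]: "qmult (- a) b = - qmult a b" "qmult a (- b) = - qmult a b"
  by (simp_all add: quat_eq_iff)

lemma norm_quat_squared: "(norm (q::real^4))\<^sup>2 = (q$1)\<^sup>2 + (q$2)\<^sup>2 + (q$3)\<^sup>2 + (q$4)\<^sup>2"
  by (simp add: norm_vec_def L2_set_def sum_4)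

lemma qmult_qconj: "qmult q (qconj q) = (norm q)\<^sup>2 *\<^sub>R qone" "qmult (qconj q) q = (norm q)\<^sup>2 *\<^sub>R qone"
  using norm_quat_squared[of q] by (simp_all add: quat_eq_iff power2_eq_square algebra_simps)

lemma norm_qmult: "norm (qmult q r) = norm q * norm r"
proof -
  have "(norm (qmult q r))\<^sup>2 = (norm q * norm r)\<^sup>2"
    unfolding power_mult_distrib norm_quat_squared by (simp add: power2_eq_square algebra_simps)
  then show ?thesis by simp
qed

lemma norm_qone [simp]: "norm qone = 1"
  using norm_quat_squared[of qone] norm_ge_zero[of qone] by (auto simp: power2_eq_1_iff)

lemma norm_qconj [simp]: "norm (qconj q) = norm q"
  by (simp add: norm_vec_def L2_set_def sum_4)

lemma qmult_qconj_unit: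
  assumes "norm q = 1"
  shows "qmult q (qconj q) = qone" "qmult (qconj q) q = qone"
    and "qmult q (qmult (qconj q) y) = y" "qmult (qconj q) (qmult q y) = y"
  using qmult_qconj[of q] assms by (simp_all flip: qmult_assoc)

lemma norm_pure_jk: "u3\<^sup>2 + u4\<^sup>2 = 1 \<Longrightarrow> norm (vector [0, 0, u3, u4] :: real^4) = 1"
  using norm_quat_squared[of "vector [0, 0, u3, u4]"] norm_ge_zero[of "vector [0, 0, u3, u4] :: real^4"]
  by (auto simp: power2_eq_1_iff)

lemma qconjugate_pure_jk:
  assumes "u3\<^sup>2 + u4\<^sup>2 = 1"
  shows "qmult (qmult (vector [0, 0, u3, u4]) (vector [0, A, B, C])) (qconj (vector [0, 0, u3, u4]))
     = vector [0, - A, (2*u3\<^sup>2 - 1) * B + 2*u3*u4 * C, 2*u3*u4 * B - (2*u3\<^sup>2 - 1) * C]"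
  using assms unfolding quat_eq_iff by (simp add: power2_eq_square) algebra

lemma exists_qmult_negate:
  assumes "norm u = 1" and "qmult u u = - qone"
  shows "\<exists>v. norm v = 1 \<and> qmult (qmult u x) v = - x"
proof (cases "x = 0")
  case True
  then show ?thesis by (intro exI[of _ qone]) simp
next
  case False
  define v where "v = (1 / (norm x)\<^sup>2) *\<^sub>R qmult (qconj x) (qmult u x)"
  have "qmult (qmult u x) (qmult (qconj x) (qmult u x)) = qmult u (qmult (qmult x (qconj x)) (qmult u x))"
    by (simp only: qmult_assoc)
  also have "\<dots> = (norm x)\<^sup>2 *\<^sub>R qmult (qmult u u) x"
    by (simp add: qmult_qconj qmult_assoc)
  finally have "qmult (qmult u x) v = - x"
    using False assms(2) by (simp add: v_def)
  then show ?thesis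
    using False assms(1) by (intro exI[of _ v]) (simp add: v_def norm_qmult power2_eq_square)
qed

definition qlmult_blocks :: "('p::finite \<Rightarrow> real^4) \<Rightarrow> real^4^'p \<Rightarrow> real^4^'p" where
  "qlmult_blocks Q x = (\<chi> s. qmult (Q s) (x$s))"

definition qsandwich :: "real^4 \<Rightarrow> ('p::finite \<Rightarrow> real^4) \<Rightarrow> real^4^'p \<Rightarrow> real^4^'p" where
  "qsandwich u v x = (\<chi> s. qmult (qmult u (x$s)) (v s))"

lemma qsandwich_qconj_inverse:
  assumes "norm u = 1" and "\<And>s. norm (v s) = 1"
  shows "qsandwich u v (qsandwich (qconj u) (\<lambda>s. qconj (v s)) x) = x"
    and "qsandwich (qconj u) (\<lambda>s. qconj (v s)) (qsandwich u v x) = x"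
  by (simp_all add: vec_eq_iff qsandwich_def qmult_assoc
      qmult_qconj_unit[OF assms(1)] qmult_qconj_unit[OF assms(2)])

lemma inv_qsandwich:
  assumes "norm u = 1" and "\<And>s. norm (v s) = 1"
  shows "inv (qsandwich u v) = qsandwich (qconj u) (\<lambda>s. qconj (v s))"
  by (rule inv_unique_comp) (simp_all add: fun_eq_iff qsandwich_qconj_inverse[OF assms])

lemma orthogonal_transformation_qsandwich:
  assumes "norm u = 1" and "\<And>s. norm (v s) = 1"
  shows "orthogonal_transformation (qsandwich u v)"
  unfolding orthogonal_transformation
proof
  show "linear (qsandwich u v)"
    by (rule linearI) (simp_all add: qsandwich_def vec_eq_iff qmult_add)
  have "norm (qsandwich u v x $ s) = norm (x$s)" for x s
    using assms by (simp add: qsandwich_def norm_qmult)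
  then show "\<forall>x. norm (qsandwich u v x) = norm x"
    by (simp add: norm_vec_def)
qed

lemma qsandwich_conj_qlmult_blocks:
  assumes "norm u = 1" and "\<And>s. norm (v s) = 1"
  shows "qsandwich u v \<circ> qlmult_blocks Q \<circ> inv (qsandwich u v)
     = qlmult_blocks (\<lambda>s. qmult (qmult u (Q s)) (qconj u))"
  by (simp add: inv_qsandwich[OF assms] fun_eq_iff vec_eq_iff qsandwich_def qlmult_blocks_def
      qmult_assoc qmult_qconj_unit[OF assms(1)] qmult_qconj_unit[OF assms(2)])

lemma exists_qsandwich_negate:
  assumes "norm u = 1" and "qmult u u = - qone"
  shows "\<exists>v. (\<forall>s. norm (v s) = 1) \<and> qsandwich u v X = - X"
proof -
  have "\<forall>s. \<exists>w. norm w = 1 \<and> qmult (qmult u (X$s)) w = - X$s"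
    using exists_qmult_negate[OF assms] by blast
  then obtain v where "\<forall>s. norm (v s) = 1 \<and> qmult (qmult u (X$s)) (v s) = - X$s"
    by metis
  then show ?thesis
    by (intro exI[of _ v]) (simp add: qsandwich_def vec_eq_iff)
qed

definition lincomb3 :: "('a \<Rightarrow> 'b::real_vector) \<Rightarrow> ('a \<Rightarrow> 'b) \<Rightarrow> ('a \<Rightarrow> 'b) \<Rightarrow> real \<Rightarrow> real \<Rightarrow> real \<Rightarrow> 'a \<Rightarrow> 'b" where
  "lincomb3 J1 J2 J3 a b c = (\<lambda>x. a *\<^sub>R J1 x + b *\<^sub>R J2 x + c *\<^sub>R J3 x)"

lemma lincomb3_diagop_ijk:
  "lincomb3 (diagop lam (Lmul qi)) (diagop mu (Lmul qj)) (diagop mu (Lmul qk)) a b c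
     = qlmult_blocks (\<lambda>s. vector [0, a * lam s, b * mu s, c * mu s])"
  unfolding lincomb3_def diagop_def Lmul_def qlmult_blocks_def
  by (rule ext, subst vec_eq_iff) (simp add: quat_eq_iff qi_def qj_def qk_def algebra_simps)

lemma qsandwich_conj_lincomb3_diagop_ijk:
  assumes "u3\<^sup>2 + u4\<^sup>2 = 1" and "\<And>s. norm (v s) = 1"
  shows "qsandwich (vector [0, 0, u3, u4]) v
           \<circ> lincomb3 (diagop lam (Lmul qi)) (diagop mu (Lmul qj)) (diagop mu (Lmul qk)) a b c
           \<circ> inv (qsandwich (vector [0, 0, u3, u4]) v)
       = lincomb3 (diagop lam (Lmul qi)) (diagop mu (Lmul qj)) (diagop mu (Lmul qk))
           (- a) ((2*u3\<^sup>2 - 1) * b + 2*u3*u4 * c) (2*u3*u4 * b - (2*u3\<^sup>2 - 1) * c)"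
  unfolding lincomb3_diagop_ijk qsandwich_conj_qlmult_blocks[OF norm_pure_jk[OF assms(1)] assms(2)]
  by (simp add: qconjugate_pure_jk[OF assms(1)] algebra_simps)

lemma inner_product_lincomb3:
  assumes V: "V = {(\<lambda>x. a *\<^sub>R J1 x + b *\<^sub>R J2 x + c *\<^sub>R J3 x) | a b c. True}"
    and ipV: "inner_product_on V ip"
    and orth: "ip J1 J2 = 0" "ip J1 J3 = 0" "ip J2 J3 = 0"
  shows "ip (lincomb3 J1 J2 J3 a b c) (lincomb3 J1 J2 J3 a' b' c')
       = a*a' * ip J1 J1 + b*b' * ip J2 J2 + c*c' * ip J3 J3"
proof -
  have KV: "lincomb3 J1 J2 J3 a b c \<in> V" for a b c
    unfolding V lincomb3_def by blast
  have J_lincomb3: "J1 = lincomb3 J1 J2 J3 1 0 0" "J2 = lincomb3 J1 J2 J3 0 1 0"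
      "J3 = lincomb3 J1 J2 J3 0 0 1"
    by (simp_all add: lincomb3_def)
  then have JV: "J1 \<in> V" "J2 \<in> V" "J3 \<in> V"
    using KV by metis+
  have lin: "ip (\<lambda>x. s *\<^sub>R K x + t *\<^sub>R K' x) L = s * ip K L + t * ip K' L"
    if "K \<in> V" "K' \<in> V" "L \<in> V" for K K' L s t
    using ipV that unfolding inner_product_on_def by blast
  have sym: "ip K L = ip L K" if "K \<in> V" "L \<in> V" for K L
    using ipV that unfolding inner_product_on_def by blast
  have lin3: "ip (lincomb3 J1 J2 J3 a b c) L = a * ip J1 L + b * ip J2 L + c * ip J3 L"
    if "L \<in> V" for a b c L
  proof -
    have JJ: "(\<lambda>x. b *\<^sub>R J2 x + c *\<^sub>R J3 x) \<in> V"
      using KV[of 0 b c] by (simp add: lincomb3_def)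
    have "ip (lincomb3 J1 J2 J3 a b c) L
        = ip (\<lambda>x. a *\<^sub>R J1 x + 1 *\<^sub>R (b *\<^sub>R J2 x + c *\<^sub>R J3 x)) L"
      by (simp add: lincomb3_def add.assoc)
    also have "\<dots> = a * ip J1 L + 1 * ip (\<lambda>x. b *\<^sub>R J2 x + c *\<^sub>R J3 x) L"
      by (rule lin[OF JV(1) JJ that])
    finally show ?thesis
      using lin[OF JV(2,3) that] by simp
  qed
  have "ip J (lincomb3 J1 J2 J3 a' b' c') = a' * ip J J1 + b' * ip J J2 + c' * ip J J3"
    if "J \<in> V" for J
    using lin3[OF that] sym[OF that] KV JV by metis
  then show ?thesis
    using lin3[OF KV, of a b c a' b' c'] JV orth sym[of J2 J1] sym[of J3 J1] sym[of J3 J2]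
    by (simp add: algebra_simps)
qed

lemma normalizer_memI_lincomb3:
  assumes V: "V = {(\<lambda>x. a *\<^sub>R J1 x + b *\<^sub>R J2 x + c *\<^sub>R J3 x) | a b c. True}"
    and ipV: "inner_product_on V ip"
    and orth: "ip J1 J2 = 0" "ip J1 J3 = 0" "ip J2 J3 = 0"
    and norm_eq: "ip J2 J2 = ip J3 J3"
    and orthN: "orthogonal_transformation N"
    and unit: "\<alpha>\<^sup>2 + \<beta>\<^sup>2 = 1"
    and conj: "\<And>a b c. N \<circ> lincomb3 J1 J2 J3 a b c \<circ> inv N
                  = lincomb3 J1 J2 J3 (- a) (\<alpha> * b + \<beta> * c) (\<beta> * b - \<alpha> * c)"
  shows "N \<in> normalizer V ip"
proof -
  have V': "V = {lincomb3 J1 J2 J3 a b c | a b c. True}"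
    unfolding V lincomb3_def by auto
  have rotation_isometric: "(\<alpha> * b + \<beta> * c) * (\<alpha> * b' + \<beta> * c') + (\<beta> * b - \<alpha> * c) * (\<beta> * b' - \<alpha> * c')
          = b * b' + c * c'" for b c b' c' :: real
    using unit by (simp add: power2_eq_square) algebra
  have ip_conj: "ip (N \<circ> lincomb3 J1 J2 J3 a b c \<circ> inv N) (N \<circ> lincomb3 J1 J2 J3 a' b' c' \<circ> inv N)
       = ip (lincomb3 J1 J2 J3 a b c) (lincomb3 J1 J2 J3 a' b' c')" for a b c a' b' c'
    unfolding conj inner_product_lincomb3[of V J1 J2 J3 ip, OF V ipV orth] norm_eq
    using rotation_isometric[of b c b' c'] by algebra
  then have "ip (N \<circ> K \<circ> inv N) (N \<circ> K' \<circ> inv N) = ip K K'" if "K \<in> V" "K' \<in> V" for K K'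
    using that unfolding V' by auto
  moreover have "N \<circ> K \<circ> inv N \<in> V" if "K \<in> V" for K
    using that unfolding V' by (auto simp only: conj) blast
  ultimately show ?thesis
    using orthN unfolding normalizer_def by blast
qed

lemma exists_unit_orthogonal:
  fixes b c :: real
  shows "\<exists>u3 u4. u3\<^sup>2 + u4\<^sup>2 = 1 \<and> b * u3 + c * u4 = 0"
proof (cases "b = 0 \<and> c = 0")
  case True
  then show ?thesis by (intro exI[of _ 1] exI[of _ 0]) simp
next
  case False
  define r where "r = sqrt (b\<^sup>2 + c\<^sup>2)"
  have r: "r\<^sup>2 = b\<^sup>2 + c\<^sup>2" "r \<noteq> 0"
    using False by (simp_all add: r_def sum_power2_gt_zero_iff)
  have "(- c / r)\<^sup>2 + (b / r)\<^sup>2 = (b\<^sup>2 + c\<^sup>2) / r\<^sup>2"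
    by (simp add: power_divide add_divide_distrib)
  also have "\<dots> = 1"
    using r False by simp
  finally have "(- c / r)\<^sup>2 + (b / r)\<^sup>2 = 1" .
  moreover have "b * (- c / r) + c * (b / r) = 0"
    by (simp add: field_simps)
  ultimately show ?thesis
    by blast
qed

theorem mainTheorem4:
  fixes lam mu :: "'p::finite \<Rightarrow> real"
    and ip :: "(real^4^'p \<Rightarrow> real^4^'p) \<Rightarrow> (real^4^'p \<Rightarrow> real^4^'p) \<Rightarrow> real"
  assumes "\<forall>s. lam s \<noteq> 0" and "\<forall>s. mu s \<noteq> 0"
    and "J1 = diagop lam (Lmul qi)" and "J2 = diagop mu (Lmul qj)" and "J3 = diagop mu (Lmul qk)"
    and "V = {(\<lambda>x. a *\<^sub>R J1 x + b *\<^sub>R J2 x + c *\<^sub>R J3 x) | a b c. True}"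
    and "inner_product_on V ip"
    and "ip J1 J2 = 0" and "ip J1 J3 = 0" and "ip J2 J3 = 0"
    and "ip J2 J2 = ip J3 J3"
  shows "WS_pair V ip"
  unfolding WS_pair_def
proof (intro ballI allI)
  fix J and X :: "real^4^'p"
  assume "J \<in> V"
  then obtain a b c where J: "J = lincomb3 J1 J2 J3 a b c"
    using assms(6) unfolding lincomb3_def by blast
  obtain u3 u4 where u: "u3\<^sup>2 + u4\<^sup>2 = 1" "b * u3 + c * u4 = 0"
    using exists_unit_orthogonal by blast
  define u :: "real^4" where "u = vector [0, 0, u3, u4]"
  have norm_u: "norm u = 1" and "qmult u u = - qone"
    using u by (simp_all add: u_def norm_pure_jk quat_eq_iff power2_eq_square)
  then obtain v where norm_v: "\<And>s. norm (v s) = 1" and NX: "qsandwich u v X = - X"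
    using exists_qsandwich_negate by blast
  define N where "N = qsandwich u v"
  define \<alpha> \<beta> where "\<alpha> = 2*u3\<^sup>2 - 1" and "\<beta> = 2*u3*u4"
  have conj: "N \<circ> lincomb3 J1 J2 J3 a' b' c' \<circ> inv N
      = lincomb3 J1 J2 J3 (- a') (\<alpha> * b' + \<beta> * c') (\<beta> * b' - \<alpha> * c')" for a' b' c'
    unfolding N_def u_def \<alpha>_def \<beta>_def assms(3-5)
    by (rule qsandwich_conj_lincomb3_diagop_ijk[OF u(1) norm_v])
  have orthN: "orthogonal_transformation N"
    unfolding N_def using orthogonal_transformation_qsandwich[OF norm_u norm_v] .
  have rot: "\<alpha>\<^sup>2 + \<beta>\<^sup>2 = 1" "\<alpha> * b + \<beta> * c = - b" "\<beta> * b - \<alpha> * c = - c"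
    using u unfolding \<alpha>_def \<beta>_def by (simp_all add: power2_eq_square) algebra+
  have "N \<in> normalizer V ip"
    by (rule normalizer_memI_lincomb3[of V J1 J2 J3 ip, OF assms(6-11) orthN rot(1) conj])
  moreover have "N \<circ> J \<circ> inv N = (\<lambda>x. - J x)"
    using conj[of a b c] unfolding rot(2,3) by (simp add: J lincomb3_def algebra_simps)
  moreover have "N (J Y) = (N \<circ> J \<circ> inv N) (N Y)" for Y
    using orthogonal_transformation_inj[OF orthN] by (simp add: inv_f_f)
  ultimately show "\<exists>N\<in>normalizer V ip. N X = - X \<and> (\<forall>Y. N (J Y) = - J (N Y))"
    using NX unfolding N_def by auto
qed

end
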